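(* Let $m\ge2$, $n\ge1$, $k\ge1$ an integer and $\mathcal{A}\in\mathbb{C}^{[m,n]}$. Then $R(\mathcal{A}^k)\le (R(\mathcal{A}))^{\mu_k}$, where $\mu_k=\frac{(m-1)^k-1}{m-2}$ if $m>2$ and $\mu_k=k$ if $m=2$.
   Context: $[n]=\{1,\ldots,n\}$. $\mathbb{C}^{[m,n]}$ denotes the set of order $m$, dimension $n$ complex tensors $\mathcal{A}=(a_{i_1\cdots i_m})$, $i_j\in[n]$. For a tensor $\mathcal{T}=(t_{i_1\cdots i_p})$ of order $p$ and dimension $n$: $r_i(\mathcal{T})=\sum_{i_2,\ldots,i_p=1}^n|t_{ii_2\cdots i_p}|$ and $R(\mathcal{T})=\max_{i\in[n]}r_i(\mathcal{T})$. General product: for $\mathcal{A}\in\mathbb{C}^{[m,n]}$ ($m\ge2$) and $\mathcal{B}\in\mathbb{C}^{[q,n]}$ ($q\ge1$), $\mathcal{A}\mathcal{B}=(c_{i\alpha_1\cdots\alpha_{m-1}})$ is the order $(m-1)(q-1)+1$, dimension $n$ tensor with $c_{i\alpha_1\cdots\alpha_{m-1}}=\sum_{i_2,\ldots,i_m=1}^n a_{ii_2\cdots i_m}b_{i_2\alpha_1}\cdots b_{i_m\alpha_{m-1}}$, $i\in[n]$, $\alpha_j\in[n]^{q-1}$ (where $b_{j\alpha}$ with $\alpha=(j_2,\ldots,j_q)$ means $b_{jj_2\cdots j_q}$). Powers: $\mathcal{A}^1=\mathcal{A}$ and $\mathcal{A}^{j+1}=\mathcal{A}\mathcal{A}^j$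 (general product; this product is associative). *)

theory Defs
  imports Complex_Main
begin

text \<open>An order p, dimension n complex tensor is represented by a function on index
lists; only its values on lists of length p with entries in {0..<n} matter
(0-based indices instead of 1..n).\<close>

type_synonym tensor = "nat list \<Rightarrow> complex"

definition idx :: "nat \<Rightarrow> nat \<Rightarrow> nat list set" where
  "idx n p = {xs. length xs = p \<and> set xs \<subseteq> {..<n}}"

definition row_sum :: "nat \<Rightarrow> nat \<Rightarrow> tensor \<Rightarrow> nat \<Rightarrow> real" where
  "row_sum n p T i = (\<Sum>xs\<in>idx n (p - 1). cmod (T (i # xs)))"

definition Rmax :: "nat \<Rightarrow> nat \<Rightarrow> tensor \<Rightarrow> real" where
  "Rmax n p T = Max ((row_sum n p T) ` {..<n})"

text \<open>General product of A (order m) and B (order q), dimension n; result has order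
(m-1)(q-1)+1, with index list i # alpha_1 @ ... @ alpha_{m-1}, each alpha_j of length q-1.\<close>
definition tprod :: "nat \<Rightarrow> nat \<Rightarrow> nat \<Rightarrow> tensor \<Rightarrow> tensor \<Rightarrow> tensor" where
  "tprod m q n A B xs =
     (\<Sum>js\<in>idx n (m - 1). A (hd xs # js) *
        (\<Prod>j<m - 1. B (js ! j # take (q - 1) (drop (j * (q - 1)) (tl xs)))))"

fun tpow :: "nat \<Rightarrow> nat \<Rightarrow> tensor \<Rightarrow> nat \<Rightarrow> tensor" where
  "tpow m n A 0 = A"
| "tpow m n A (Suc 0) = A"
| "tpow m n A (Suc (Suc j)) = tprod m ((m - 1) ^ Suc j + 1) n A (tpow m n A (Suc j))"

definition mu :: "nat \<Rightarrow> nat \<Rightarrow> nat" where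
  "mu m k = (if m > 2 then ((m - 1) ^ k - 1) div (m - 2) else k)"

end

theory Submission
  imports Defs
begin

text \<open>Bounding the modulus of the defining sum of \<open>A B\<close> by the sum of moduli, the sum over
the trailing indices splits along the \<open>m - 1\<close> blocks of length \<open>q - 1\<close> into a product of
row sums of \<open>B\<close>. Hence \<open>r_i(A B) \<le> r_i(A) R(B)^(m - 1)\<close>, so \<open>R(A B) \<le> R(A) R(B)^(m - 1)\<close>,
and induction on \<open>k\<close> gives the claim because \<open>\<mu>_k = \<Sum>\<^sub>i\<^sub><\<^sub>k (m - 1)^i\<close> satisfies
\<open>\<mu>_1 = 1\<close> and \<open>\<mu>_(k+1) = 1 + (m - 1) \<mu>_k\<close>.\<close>

lemma idx_add_eq_append_image: "idx n (a + b) = (\<lambda>(x, y). x @ y) ` (idx n a \<times> idx n b)"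
proof
  show "idx n (a + b) \<subseteq> (\<lambda>(x, y). x @ y) ` (idx n a \<times> idx n b)"
  proof
    fix xs assume xs: "xs \<in> idx n (a + b)"
    have "(take a xs, drop a xs) \<in> idx n a \<times> idx n b"
      using xs unfolding idx_def by (auto dest: in_set_takeD in_set_dropD)
    then show "xs \<in> (\<lambda>(x, y). x @ y) ` (idx n a \<times> idx n b)"
      by (metis (no_types, lifting) append_take_drop_id case_prod_conv image_eqI)
  qed
qed (auto simp: idx_def)

lemma inj_on_append_idx: "inj_on (\<lambda>(x, y). x @ y) (idx n a \<times> idx n b)"
  by (auto simp: inj_on_def idx_def)

lemma sum_idx_prod_blocks:
  fixes f :: "nat \<Rightarrow> nat list \<Rightarrow> 'a::comm_semiring_1"
  shows "(\<Sum>xs\<in>idx n (p * L). \<Prod>j<p. f j (take L (drop (j * L) xs)))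
       = (\<Prod>j<p. \<Sum>a\<in>idx n L. f j a)"
proof (induction p arbitrary: f)
  case 0
  have "idx n 0 = {[]}" by (auto simp: idx_def)
  then show ?case by simp
next
  case (Suc p)
  let ?blocks = "\<lambda>g b. \<Prod>j<p. g j (take L (drop (j * L) b))"
  have split_first: "(\<Prod>j<Suc p. f j (take L (drop (j * L) (a @ b))))
      = f 0 a * ?blocks (\<lambda>j. f (Suc j)) b" if "a \<in> idx n L" for a b
    using that by (simp add: idx_def prod.lessThan_Suc_shift del: prod.lessThan_Suc)
  have "(\<Sum>xs\<in>idx n (Suc p * L). \<Prod>j<Suc p. f j (take L (drop (j * L) xs)))
      = (\<Sum>(a, b)\<in>idx n L \<times> idx n (p * L). \<Prod>j<Suc p. f j (take L (drop (j * L) (a @ b))))"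
    unfolding mult_Suc idx_add_eq_append_image
    by (subst sum.reindex[OF inj_on_append_idx]) (simp add: case_prod_beta')
  also have "\<dots> = (\<Sum>(a, b)\<in>idx n L \<times> idx n (p * L). f 0 a * ?blocks (\<lambda>j. f (Suc j)) b)"
    by (intro sum.cong refl) (auto simp: split_first simp del: prod.lessThan_Suc take_append drop_append)
  also have "\<dots> = (\<Sum>a\<in>idx n L. f 0 a) * (\<Sum>b\<in>idx n (p * L). ?blocks (\<lambda>j. f (Suc j)) b)"
    by (simp add: sum_product sum.cartesian_product)
  also have "\<dots> = (\<Prod>j<Suc p. \<Sum>a\<in>idx n L. f j a)"
    by (simp only: Suc.IH[of "\<lambda>j. f (Suc j)"] prod.lessThan_Suc_shift)
  finally show ?case .
qed

lemma row_sum_nonneg: "row_sum n p T i \<ge> 0"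
  unfolding row_sum_def by (simp add: sum_nonneg)

lemma row_sum_le_Rmax: "i < n \<Longrightarrow> row_sum n p T i \<le> Rmax n p T"
  unfolding Rmax_def by (rule Max_ge) auto

lemma Rmax_nonneg: "n \<ge> 1 \<Longrightarrow> Rmax n p T \<ge> 0"
  using row_sum_le_Rmax[of 0 n p T] row_sum_nonneg[of n p T 0] by simp

lemma Rmax_le_iff: "n \<ge> 1 \<Longrightarrow> Rmax n p T \<le> c \<longleftrightarrow> (\<forall>i<n. row_sum n p T i \<le> c)"
  unfolding Rmax_def by (subst Max_le_iff) (auto simp: lessThan_empty_iff)

lemma row_sum_tprod_le:
  assumes "n \<ge> 1"
  shows "row_sum n ((m - 1) * (q - 1) + 1) (tprod m q n A B) i
         \<le> row_sum n m A i * Rmax n q B ^ (m - 1)"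
proof -
  let ?blk = "\<lambda>j xs. take (q - 1) (drop (j * (q - 1)) xs)"
  let ?Bprod = "\<lambda>js xs. \<Prod>j<m - 1. cmod (B (js ! j # ?blk j xs))"
  have "row_sum n ((m - 1) * (q - 1) + 1) (tprod m q n A B) i
      = (\<Sum>xs\<in>idx n ((m - 1) * (q - 1)). cmod (\<Sum>js\<in>idx n (m - 1). A (i # js) *
          (\<Prod>j<m - 1. B (js ! j # ?blk j xs))))"
    unfolding row_sum_def tprod_def by simp
  also have "\<dots> \<le> (\<Sum>xs\<in>idx n ((m - 1) * (q - 1)). \<Sum>js\<in>idx n (m - 1).
          cmod (A (i # js)) * ?Bprod js xs)"
    by (intro sum_mono order_trans[OF norm_sum]) (simp add: norm_mult prod_norm)
  also have "\<dots> = (\<Sum>js\<in>idx n (m - 1). cmod (A (i # js)) *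
          (\<Sum>xs\<in>idx n ((m - 1) * (q - 1)). ?Bprod js xs))"
    by (subst sum.swap) (simp add: sum_distrib_left)
  also have "\<dots> = (\<Sum>js\<in>idx n (m - 1). cmod (A (i # js)) * (\<Prod>j<m - 1. row_sum n q B (js ! j)))"
  proof (intro sum.cong refl arg_cong2[where f = "(*)"])
    fix js
    show "(\<Sum>xs\<in>idx n ((m - 1) * (q - 1)). ?Bprod js xs) = (\<Prod>j<m - 1. row_sum n q B (js ! j))"
      using sum_idx_prod_blocks[where f = "\<lambda>j a. cmod (B (js ! j # a))"] by (simp add: row_sum_def)
  qed
  also have "\<dots> \<le> (\<Sum>js\<in>idx n (m - 1). cmod (A (i # js)) * Rmax n q B ^ (m - 1))"
  proof (intro sum_mono mult_left_mono)
    fix js assume "js \<in> idx n (m - 1)"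
    then have "js ! j < n" if "j < m - 1" for j
      using that unfolding idx_def by (metis (mono_tags) lessThan_iff mem_Collect_eq nth_mem subsetD)
    then have "(\<Prod>j<m - 1. row_sum n q B (js ! j)) \<le> (\<Prod>j<m - 1. Rmax n q B)"
      by (intro prod_mono) (simp add: row_sum_nonneg row_sum_le_Rmax)
    then show "(\<Prod>j<m - 1. row_sum n q B (js ! j)) \<le> Rmax n q B ^ (m - 1)" by simp
  qed simp
  also have "\<dots> = row_sum n m A i * Rmax n q B ^ (m - 1)"
    unfolding row_sum_def by (simp add: sum_distrib_right)
  finally show ?thesis .
qed

lemma Rmax_tprod_le:
  assumes "n \<ge> 1"
  shows "Rmax n ((m - 1) * (q - 1) + 1) (tprod m q n A B) \<le> Rmax n m A * Rmax n q B ^ (m - 1)"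
proof -
  have "row_sum n ((m - 1) * (q - 1) + 1) (tprod m q n A B) i \<le> Rmax n m A * Rmax n q B ^ (m - 1)"
    if "i < n" for i
    using row_sum_tprod_le[OF assms] row_sum_le_Rmax[OF that] Rmax_nonneg[OF assms]
    by (meson order_trans mult_right_mono zero_le_power)
  then show ?thesis using assms by (simp add: Rmax_le_iff)
qed

lemma mu_eq_sum_powers:
  assumes "m \<ge> 2"
  shows "mu m k = (\<Sum>i<k. (m - 1) ^ i)"
proof (cases "m = 2")
  case False
  have "int ((m - 1) ^ k - 1) = int (m - 2) * int (\<Sum>i<k. (m - 1) ^ i)"
    using assms power_diff_1_eq[of "int (m - 1)" k] by (simp add: of_nat_diff)
  then have "(m - 1) ^ k - 1 = (m - 2) * (\<Sum>i<k. (m - 1) ^ i)"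
    by (simp only: of_nat_mult[symmetric] of_nat_eq_iff)
  then show ?thesis using assms False by (simp add: mu_def)
qed (simp add: mu_def)

lemma mu_one: "m \<ge> 2 \<Longrightarrow> mu m 1 = 1"
  by (simp add: mu_eq_sum_powers)

lemma mu_Suc: "m \<ge> 2 \<Longrightarrow> mu m (Suc k) = 1 + (m - 1) * mu m k"
  by (simp add: mu_eq_sum_powers sum.lessThan_Suc_shift sum_distrib_left del: sum.lessThan_Suc)

theorem corollary2p5:
  fixes m n k :: nat and A :: tensor
  assumes "m \<ge> 2" and "n \<ge> 1" and "k \<ge> 1"
  shows "Rmax n ((m - 1) ^ k + 1) (tpow m n A k) \<le> (Rmax n m A) ^ (mu m k)"
  using assms(3)
proof (induction k rule: dec_induct)
  case base
  show ?case using assms(1) mu_one[OF assms(1)] by simp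
next
  case (step k)
  let ?R = "Rmax n m A"
  have "tpow m n A (Suc k) = tprod m ((m - 1) ^ k + 1) n A (tpow m n A k)"
    using step(1) by (cases k) auto
  then have "Rmax n ((m - 1) ^ Suc k + 1) (tpow m n A (Suc k))
      \<le> ?R * Rmax n ((m - 1) ^ k + 1) (tpow m n A k) ^ (m - 1)"
    using Rmax_tprod_le[OF assms(2), of m "(m - 1) ^ k + 1" A] by simp
  also have "\<dots> \<le> ?R * (?R ^ mu m k) ^ (m - 1)"
    using step(3) Rmax_nonneg[OF assms(2)] by (simp add: mult_left_mono power_mono)
  also have "\<dots> = ?R ^ mu m (Suc k)"
    by (simp add: mu_Suc[OF assms(1)] power_add power_mult mult.commute)
  finally show ?case .
qed

end
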